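(* Let $d\in\mathbb{N}$, $k\in\{1,\dots,d\}$ and $\mathbf{e}_1\in\mathbb{R}^d$. Assume there exists $\delta>0$ such that (a) $\big||e_{1i}|-|e_{1j}|\big|\ge\sqrt2\,\delta$ for all $i\neq j$ in $\mathrm{TopFeatures}(\mathbf{e}_1;\min(k+1,d))$, and (b) if $k=d$, additionally $|e_{1i}|\ge\delta$ for all $i\in[d]$. Then for every $\mathbf{e}_2\in\mathbb{R}^d$, $$1-\mathrm{SignedRankAgree}(\mathbf{e}_1,\mathbf{e}_2;k)\le\delta^{-1}\,\|\mathbf{e}_1-\mathbf{e}_2\|_2 .$$
   Context: $\|\cdot\|_2$ is the Euclidean norm. $\mathrm{sign}(x):=1$ if $x\ge0$ and $-1$ otherwise. For $\mathbf{x}\in\mathbb{R}^d$, $\mathrm{rank}(\mathbf{x},i)$ denotes the position of index $i$ when indices are ordered by descending $|x_i|$, i.e. $|\{j\in[d]:|x_j|\ge|x_i|\}|$, with ties broken so that ranks form a permutation of $[d]$ (paper's convention: if $|x_i|=|x_j|$ with $i>j$ then $\mathrm{rank}(\mathbf{x},j)=\mathrm{rank}(\mathbf{x},i)+1$). $\mathrm{TopFeatures}(\mathbf{x};m):=\{i\in[d]:\mathrm{rank}(\mathbf{x},i)\le m\}$. The top-$k$ signed rank agreement is $\mathrm{SignedRankAgree}(\mathbf{e}_1,\mathbf{e}_2;k):=\frac1k\big|\{i\in[d]: i\in\mathrm{TopFeatures}(\mathbf{e}_1;k)\wedge i\in\mathrm{TopFeatures}(\mathbf{e}_2;k)\wedge\mathrm{sign}(e_{1i})=\mathrm{sign}(e_{2i})\wedge\mathrm{rank}(\mathbf{e}_1,i)=\mathrm{rank}(\mathbf{e}_2,i)\}\big|$.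 *)

theory Defs
  imports Complex_Main
begin

(* Vectors in R^d are modelled as functions nat => real; only the
   coordinates 1..d are relevant. *)

definition sign :: "real \<Rightarrow> real" where
  "sign x = (if x \<ge> 0 then 1 else -1)"

(* rank(x,i): position of i when indices 1..d are ordered by descending |x_i|;
   ties: if |x_i| = |x_j| and i > j then rank(x,j) = rank(x,i) + 1,
   i.e. among tied indices the larger index comes first. *)
definition rank :: "nat \<Rightarrow> (nat \<Rightarrow> real) \<Rightarrow> nat \<Rightarrow> nat" where
  "rank d x i = card {j \<in> {1..d}. \<bar>x j\<bar> > \<bar>x i\<bar>}
              + card {j \<in> {1..d}. \<bar>x j\<bar> = \<bar>x i\<bar> \<and> j \<ge> i}"

definition TopFeatures :: "nat \<Rightarrow> (nat \<Rightarrow> real) \<Rightarrow> nat \<Rightarrow> nat set" where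
  "TopFeatures d x m = {i \<in> {1..d}. rank d x i \<le> m}"

definition SignedRankAgree :: "nat \<Rightarrow> (nat \<Rightarrow> real) \<Rightarrow> (nat \<Rightarrow> real) \<Rightarrow> nat \<Rightarrow> real" where
  "SignedRankAgree d e1 e2 k =
     real (card {i \<in> {1..d}. i \<in> TopFeatures d e1 k \<and> i \<in> TopFeatures d e2 k
                 \<and> sign (e1 i) = sign (e2 i) \<and> rank d e1 i = rank d e2 i}) / real k"

definition l2dist :: "nat \<Rightarrow> (nat \<Rightarrow> real) \<Rightarrow> (nat \<Rightarrow> real) \<Rightarrow> real" where
  "l2dist d x y = sqrt (\<Sum>i = 1..d. (x i - y i)\<^sup>2)"

end

theory Submission
  imports Defs
begin

text \<open>If \<open>\<parallel>e\<^sub>1 - e\<^sub>2\<parallel> \<ge> \<delta>\<close> the bound is trivial. Otherwise every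
  coordinate moves by less than \<open>\<delta>\<close> and any two coordinates move by less than \<open>\<surd>2 \<delta>\<close> in
  total (since \<open>(a + b)\<^sup>2 \<le> 2(a\<^sup>2 + b\<^sup>2)\<close>). The gap hypothesis separates every top-\<open>k\<close>
  feature of \<open>e\<^sub>1\<close> from every other feature by at least \<open>\<surd>2 \<delta>\<close>, so all magnitude comparisons
  involving a top-\<open>k\<close> feature, and hence its rank, survive the perturbation; its magnitude is
  at least \<open>\<delta>\<close>, so its sign survives too. Thus the signed rank agreement is \<open>1\<close>.\<close>

definition ranks_le :: "(nat \<Rightarrow> real) \<Rightarrow> nat \<Rightarrow> nat \<Rightarrow> bool" where
  "ranks_le x j i \<longleftrightarrow> \<bar>x i\<bar> < \<bar>x j\<bar> \<or> (\<bar>x j\<bar> = \<bar>x i\<bar> \<and> i \<le> j)"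

lemma ranks_le_refl: "ranks_le x i i"
  unfolding ranks_le_def by simp

lemma ranks_le_trans: "ranks_le x i j \<Longrightarrow> ranks_le x j l \<Longrightarrow> ranks_le x i l"
  unfolding ranks_le_def by auto

lemma ranks_le_total: "ranks_le x i j \<or> ranks_le x j i"
  unfolding ranks_le_def by auto

lemma ranks_le_antisym: "ranks_le x i j \<Longrightarrow> ranks_le x j i \<Longrightarrow> i = j"
  unfolding ranks_le_def by auto

lemma rank_eq_card_ranks_le: "rank d x i = card {j \<in> {1..d}. ranks_le x j i}"
proof -
  have "{j \<in> {1..d}. ranks_le x j i}
      = {j \<in> {1..d}. \<bar>x j\<bar> > \<bar>x i\<bar>} \<union> {j \<in> {1..d}. \<bar>x j\<bar> = \<bar>x i\<bar> \<and> j \<ge> i}"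
    unfolding ranks_le_def by auto
  moreover have "card ({j \<in> {1..d}. \<bar>x j\<bar> > \<bar>x i\<bar>} \<union> {j \<in> {1..d}. \<bar>x j\<bar> = \<bar>x i\<bar> \<and> j \<ge> i})
      = card {j \<in> {1..d}. \<bar>x j\<bar> > \<bar>x i\<bar>} + card {j \<in> {1..d}. \<bar>x j\<bar> = \<bar>x i\<bar> \<and> j \<ge> i}"
    by (rule card_Un_disjoint) auto
  ultimately show ?thesis
    unfolding rank_def by simp
qed

lemma rank_strict_mono:
  assumes "ranks_le x i j" and "i \<noteq> j" and "j \<in> {1..d}"
  shows "rank d x i < rank d x j"
  unfolding rank_eq_card_ranks_le
proof (rule psubset_card_mono)
  have "j \<in> {l \<in> {1..d}. ranks_le x l j}" "j \<notin> {l \<in> {1..d}. ranks_le x l i}"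
    using assms ranks_le_refl ranks_le_antisym by blast+
  then show "{l \<in> {1..d}. ranks_le x l i} \<subset> {l \<in> {1..d}. ranks_le x l j}"
    using assms(1) by (auto intro: ranks_le_trans)
qed simp

lemma ranks_le_if_rank_le:
  assumes "rank d x i \<le> rank d x j" and "i \<in> {1..d}"
  shows "ranks_le x i j"
proof (rule ccontr)
  assume "\<not> ranks_le x i j"
  then have "ranks_le x j i" and "j \<noteq> i"
    using ranks_le_total ranks_le_refl by blast+
  then have "rank d x j < rank d x i"
    using rank_strict_mono assms(2) by blast
  with assms(1) show False
    by simp
qed

lemma abs_le_if_rank_le:
  assumes "rank d x i \<le> rank d x j" and "i \<in> {1..d}"
  shows "\<bar>x j\<bar> \<le> \<bar>x i\<bar>"
  using ranks_le_if_rank_le[OF assms] unfolding ranks_le_def by auto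

lemma inj_on_rank: "inj_on (rank d x) {1..d}"
  by (rule inj_onI) (metis le_antisym ranks_le_if_rank_le ranks_le_antisym order_refl)

lemma rank_bounds:
  assumes "i \<in> {1..d}"
  shows "rank d x i \<in> {1..d}"
proof -
  let ?A = "{j \<in> {1..d}. ranks_le x j i}"
  have "i \<in> ?A"
    using assms by (simp add: ranks_le_refl)
  then have "0 < card ?A"
    by (auto simp: card_gt_0_iff)
  moreover have "card ?A \<le> card {1..d}"
    by (rule card_mono) auto
  ultimately show ?thesis
    unfolding rank_eq_card_ranks_le by simp
qed

lemma rank_image: "rank d x ` {1..d} = {1..d}"
proof -
  have "rank d x ` {1..d} \<subseteq> {1..d}"
    using rank_bounds by blast
  moreover have "card (rank d x ` {1..d}) = card {1..d}"
    using inj_on_rank card_image by blast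
  ultimately show ?thesis
    by (simp add: card_subset_eq)
qed

lemma TopFeatures_all: "TopFeatures d x d = {1..d}"
  unfolding TopFeatures_def using rank_bounds by auto

lemma card_TopFeatures:
  assumes "m \<le> d"
  shows "card (TopFeatures d x m) = m"
proof -
  have inj: "inj_on (rank d x) (TopFeatures d x m)"
    using inj_on_rank by (rule inj_on_subset) (auto simp: TopFeatures_def)
  have "rank d x ` TopFeatures d x m = {1..m}"
  proof
    show "rank d x ` TopFeatures d x m \<subseteq> {1..m}"
      using rank_bounds unfolding TopFeatures_def by force
    show "{1..m} \<subseteq> rank d x ` TopFeatures d x m"
    proof
      fix r assume r: "r \<in> {1..m}"
      then have "r \<in> rank d x ` {1..d}"
        using assms rank_image[of d x] by simp
      then obtain i where "i \<in> {1..d}" "r = rank d x i"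
        by blast
      with r show "r \<in> rank d x ` TopFeatures d x m"
        unfolding TopFeatures_def by auto
    qed
  qed
  then show ?thesis
    using card_image[OF inj] by simp
qed

lemma abs_order_stable:
  fixes a b a' b' :: real
  assumes "\<bar>a - a'\<bar> + \<bar>b - b'\<bar> < \<bar>\<bar>a\<bar> - \<bar>b\<bar>\<bar>"
  shows "(\<bar>a'\<bar> < \<bar>b'\<bar> \<longleftrightarrow> \<bar>a\<bar> < \<bar>b\<bar>) \<and> (\<bar>b'\<bar> = \<bar>a'\<bar> \<longleftrightarrow> \<bar>b\<bar> = \<bar>a\<bar>)"
proof -
  have "\<bar>\<bar>a\<bar> - \<bar>a'\<bar>\<bar> \<le> \<bar>a - a'\<bar>" and "\<bar>\<bar>b\<bar> - \<bar>b'\<bar>\<bar> \<le> \<bar>b - b'\<bar>"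
    by (rule abs_triangle_ineq3)+
  with assms show ?thesis
    by (smt (verit))
qed

lemma rank_eq_if_abs_order_eq:
  assumes "\<forall>j \<in> {1..d}. (\<bar>y i\<bar> < \<bar>y j\<bar> \<longleftrightarrow> \<bar>x i\<bar> < \<bar>x j\<bar>) \<and> (\<bar>y j\<bar> = \<bar>y i\<bar> \<longleftrightarrow> \<bar>x j\<bar> = \<bar>x i\<bar>)"
  shows "rank d y i = rank d x i"
proof -
  have "{j \<in> {1..d}. \<bar>y j\<bar> > \<bar>y i\<bar>} = {j \<in> {1..d}. \<bar>x j\<bar> > \<bar>x i\<bar>}"
    "{j \<in> {1..d}. \<bar>y j\<bar> = \<bar>y i\<bar> \<and> j \<ge> i} = {j \<in> {1..d}. \<bar>x j\<bar> = \<bar>x i\<bar> \<and> j \<ge> i}"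
    using assms by auto
  then show ?thesis
    unfolding rank_def by simp
qed

lemma rank_eq_if_perturbation_small:
  assumes "\<forall>j \<in> {1..d}. j \<noteq> i \<longrightarrow> \<bar>x i - y i\<bar> + \<bar>x j - y j\<bar> < \<bar>\<bar>x i\<bar> - \<bar>x j\<bar>\<bar>"
  shows "rank d y i = rank d x i"
proof (intro rank_eq_if_abs_order_eq ballI)
  fix j assume j: "j \<in> {1..d}"
  show "(\<bar>y i\<bar> < \<bar>y j\<bar> \<longleftrightarrow> \<bar>x i\<bar> < \<bar>x j\<bar>) \<and> (\<bar>y j\<bar> = \<bar>y i\<bar> \<longleftrightarrow> \<bar>x j\<bar> = \<bar>x i\<bar>)"
  proof (cases "j = i")
    case False
    then have "\<bar>x i - y i\<bar> + \<bar>x j - y j\<bar> < \<bar>\<bar>x i\<bar> - \<bar>x j\<bar>\<bar>"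
      using assms j by blast
    then show ?thesis
      by (rule abs_order_stable)
  qed simp
qed

lemma sign_eq_if_dist_less: "\<bar>x - y\<bar> < \<bar>x\<bar> \<Longrightarrow> sign y = sign x"
  unfolding sign_def by auto

lemma SignedRankAgree_nonneg: "0 \<le> SignedRankAgree d x y k"
  unfolding SignedRankAgree_def by simp

lemma SignedRankAgree_eq_1:
  assumes "1 \<le> k" and "k \<le> d"
    and "\<forall>i \<in> TopFeatures d x k. sign (y i) = sign (x i) \<and> rank d y i = rank d x i"
  shows "SignedRankAgree d x y k = 1"
proof -
  have "TopFeatures d x k \<subseteq> TopFeatures d y k"
    using assms(3) unfolding TopFeatures_def by auto
  then have "{i \<in> {1..d}. i \<in> TopFeatures d x k \<and> i \<in> TopFeatures d y k
      \<and> sign (x i) = sign (y i) \<and> rank d x i = rank d y i} = TopFeatures d x k"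
    using assms(3) unfolding TopFeatures_def by auto
  then show ?thesis
    unfolding SignedRankAgree_def using card_TopFeatures[OF assms(2)] assms(1) by simp
qed

lemma l2dist_nonneg: "0 \<le> l2dist d x y"
  unfolding l2dist_def by (simp add: sum_nonneg)

lemma abs_diff_le_l2dist:
  assumes "i \<in> {1..d}"
  shows "\<bar>x i - y i\<bar> \<le> l2dist d x y"
proof -
  have "(x i - y i)\<^sup>2 \<le> (\<Sum>l = 1..d. (x l - y l)\<^sup>2)"
    by (rule member_le_sum) (use assms in auto)
  then show ?thesis
    unfolding l2dist_def by (rule real_le_rsqrt[of "\<bar>x i - y i\<bar>", simplified])
qed

lemma abs_diff_add_abs_diff_le_l2dist:
  assumes "i \<in> {1..d}" and "j \<in> {1..d}" and "i \<noteq> j"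
  shows "\<bar>x i - y i\<bar> + \<bar>x j - y j\<bar> \<le> sqrt 2 * l2dist d x y"
proof -
  define a b where "a = \<bar>x i - y i\<bar>" and "b = \<bar>x j - y j\<bar>"
  have "(a + b)\<^sup>2 \<le> 2 * (a\<^sup>2 + b\<^sup>2)"
    using sum_squares_bound[of a b] by (simp add: power2_sum)
  also have "a\<^sup>2 + b\<^sup>2 = (\<Sum>l \<in> {i, j}. (x l - y l)\<^sup>2)"
    using assms(3) unfolding a_def b_def by simp
  also have "\<dots> \<le> (\<Sum>l = 1..d. (x l - y l)\<^sup>2)"
    by (rule sum_mono2) (use assms in auto)
  finally have "a + b \<le> sqrt (2 * (\<Sum>l = 1..d. (x l - y l)\<^sup>2))"
    by (intro real_le_rsqrt) simp
  then show ?thesis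
    unfolding a_def b_def l2dist_def by (simp add: real_sqrt_mult)
qed

lemma sign_eq_if_l2dist_less:
  assumes "i \<in> {1..d}" and "l2dist d x y < \<delta>" and "\<delta> \<le> \<bar>x i\<bar>"
  shows "sign (y i) = sign (x i)"
  using abs_diff_le_l2dist[OF assms(1), of x y] assms(2,3) by (intro sign_eq_if_dist_less) simp

lemma rank_eq_if_l2dist_less:
  assumes "i \<in> {1..d}" and "l2dist d x y < \<delta>"
    and gap: "\<forall>j \<in> {1..d}. j \<noteq> i \<longrightarrow> sqrt 2 * \<delta> \<le> \<bar>\<bar>x i\<bar> - \<bar>x j\<bar>\<bar>"
  shows "rank d y i = rank d x i"
proof (intro rank_eq_if_perturbation_small ballI impI)
  fix j assume j: "j \<in> {1..d}" "j \<noteq> i"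
  have "\<bar>x i - y i\<bar> + \<bar>x j - y j\<bar> \<le> sqrt 2 * l2dist d x y"
    using abs_diff_add_abs_diff_le_l2dist assms(1) j by metis
  also have "\<dots> < sqrt 2 * \<delta>"
    using assms(2) by simp
  also have "\<dots> \<le> \<bar>\<bar>x i\<bar> - \<bar>x j\<bar>\<bar>"
    using gap j by blast
  finally show "\<bar>x i - y i\<bar> + \<bar>x j - y j\<bar> < \<bar>\<bar>x i\<bar> - \<bar>x j\<bar>\<bar>" .
qed

lemma TopFeatures_abs_gap:
  assumes "k < d"
    and sep: "\<forall>i \<in> TopFeatures d x (k + 1). \<forall>j \<in> TopFeatures d x (k + 1).
                i \<noteq> j \<longrightarrow> g \<le> \<bar>\<bar>x i\<bar> - \<bar>x j\<bar>\<bar>"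
    and i: "i \<in> TopFeatures d x k" and j: "j \<in> {1..d}" "j \<notin> TopFeatures d x k"
  shows "g + \<bar>x j\<bar> \<le> \<bar>x i\<bar>"
proof -
  \<comment> \<open>the \<open>(k+1)\<close>-th ranked feature \<open>m\<close> sits between the top \<open>k\<close> and all other features\<close>
  have "k + 1 \<in> rank d x ` {1..d}"
    using rank_image[of d x] assms(1) by simp
  then obtain m where m: "m \<in> {1..d}" "rank d x m = k + 1"
    by (metis imageE)
  have i': "i \<in> {1..d}" "rank d x i \<le> k"
    using i unfolding TopFeatures_def by auto
  have "i \<in> TopFeatures d x (k + 1)" "m \<in> TopFeatures d x (k + 1)" "i \<noteq> m"
    using i' m unfolding TopFeatures_def by auto
  then have "g \<le> \<bar>\<bar>x i\<bar> - \<bar>x m\<bar>\<bar>"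
    using sep by blast
  moreover have "\<bar>x m\<bar> \<le> \<bar>x i\<bar>"
    using i' m by (intro abs_le_if_rank_le) auto
  moreover have "\<bar>x j\<bar> \<le> \<bar>x m\<bar>"
    using j m unfolding TopFeatures_def by (intro abs_le_if_rank_le) auto
  ultimately show ?thesis
    by linarith
qed

lemma TopFeatures_separated:
  assumes "k \<le> d"
    and sep: "\<forall>i \<in> TopFeatures d x (min (k + 1) d). \<forall>j \<in> TopFeatures d x (min (k + 1) d).
                i \<noteq> j \<longrightarrow> g \<le> \<bar>\<bar>x i\<bar> - \<bar>x j\<bar>\<bar>"
    and i: "i \<in> TopFeatures d x k" and j: "j \<in> {1..d}" "j \<noteq> i"
  shows "g \<le> \<bar>\<bar>x i\<bar> - \<bar>x j\<bar>\<bar>"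
proof (cases "j \<in> TopFeatures d x k")
  case True
  have "TopFeatures d x k \<subseteq> TopFeatures d x (min (k + 1) d)"
    using assms(1) unfolding TopFeatures_def by auto
  then have "i \<in> TopFeatures d x (min (k + 1) d)" and "j \<in> TopFeatures d x (min (k + 1) d)"
    using i True by auto
  then show ?thesis
    using sep j(2) by auto
next
  case False
  then have "k \<noteq> d"
    using j TopFeatures_all[of d x] by auto
  with assms(1) have "k < d"
    by simp
  then have "min (k + 1) d = k + 1"
    by simp
  then have "g + \<bar>x j\<bar> \<le> \<bar>x i\<bar>"
    using TopFeatures_abs_gap[OF \<open>k < d\<close> _ i j(1) False] sep by (simp only:)
  then show ?thesis
    using abs_ge_self[of "\<bar>x i\<bar> - \<bar>x j\<bar>"] by linarith
qed

lemma TopFeatures_abs_ge: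
  assumes "k \<le> d" and "\<delta> \<le> g"
    and sep: "\<forall>i \<in> TopFeatures d x (min (k + 1) d). \<forall>j \<in> TopFeatures d x (min (k + 1) d).
                i \<noteq> j \<longrightarrow> g \<le> \<bar>\<bar>x i\<bar> - \<bar>x j\<bar>\<bar>"
    and all_ge: "k = d \<longrightarrow> (\<forall>i \<in> {1..d}. \<delta> \<le> \<bar>x i\<bar>)"
    and i: "i \<in> TopFeatures d x k"
  shows "\<delta> \<le> \<bar>x i\<bar>"
proof (cases "k = d")
  case True
  then show ?thesis
    using all_ge i unfolding TopFeatures_def by auto
next
  case False
  then have "k < d"
    using assms(1) by simp
  then have "TopFeatures d x k \<noteq> {1..d}"
    using card_TopFeatures[of k d x] by auto
  moreover have "TopFeatures d x k \<subseteq> {1..d}"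
    unfolding TopFeatures_def by auto
  ultimately obtain j where "j \<in> {1..d}" "j \<notin> TopFeatures d x k"
    by blast
  moreover have "min (k + 1) d = k + 1"
    using \<open>k < d\<close> by simp
  ultimately have "g + \<bar>x j\<bar> \<le> \<bar>x i\<bar>"
    using TopFeatures_abs_gap[OF \<open>k < d\<close> _ i] sep by (simp only:)
  then show ?thesis
    using assms(2) by linarith
qed

theorem lemma5:
  fixes d k :: nat and e1 e2 :: "nat \<Rightarrow> real" and \<delta> :: real
  assumes "1 \<le> k" and "k \<le> d"
    and "\<delta> > 0"
    and "\<forall>i \<in> TopFeatures d e1 (min (k + 1) d). \<forall>j \<in> TopFeatures d e1 (min (k + 1) d).
           i \<noteq> j \<longrightarrow> \<bar>\<bar>e1 i\<bar> - \<bar>e1 j\<bar>\<bar> \<ge> sqrt 2 * \<delta>"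
    and "k = d \<longrightarrow> (\<forall>i \<in> {1..d}. \<bar>e1 i\<bar> \<ge> \<delta>)"
  shows "1 - SignedRankAgree d e1 e2 k \<le> inverse \<delta> * l2dist d e1 e2"
proof (cases "l2dist d e1 e2 < \<delta>")
  case False
  then have "1 \<le> inverse \<delta> * l2dist d e1 e2"
    using \<open>\<delta> > 0\<close> by (simp add: field_simps)
  then show ?thesis
    using SignedRankAgree_nonneg[of d e1 e2 k] by linarith
next
  case True
  have "SignedRankAgree d e1 e2 k = 1"
  proof (intro SignedRankAgree_eq_1 ballI conjI)
    fix i assume i: "i \<in> TopFeatures d e1 k"
    then have "i \<in> {1..d}"
      unfolding TopFeatures_def by simp
    have "\<delta> \<le> sqrt 2 * \<delta>"
      using \<open>\<delta> > 0\<close> by (simp add: real_le_rsqrt)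
    then have "\<delta> \<le> \<bar>e1 i\<bar>"
      using TopFeatures_abs_ge assms(2,4,5) i by blast
    then show "sign (e2 i) = sign (e1 i)"
      using sign_eq_if_l2dist_less \<open>i \<in> {1..d}\<close> True by blast
    show "rank d e2 i = rank d e1 i"
      using rank_eq_if_l2dist_less \<open>i \<in> {1..d}\<close> True TopFeatures_separated[OF assms(2,4) i] by blast
  qed (use assms(1,2) in auto)
  then show ?thesis
    using l2dist_nonneg[of d e1 e2] \<open>\<delta> > 0\<close> by simp
qed

end
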